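(* Let $n\ge2$, let $\lambda_1\ge\dots\ge\lambda_n$ be real, and let $\mu_1\ge\dots\ge\mu_{n-1}$ be the critical points (with multiplicity) of $q(x)=\prod_{j=1}^n(x-\lambda_j)$. Then for every $r$ with $1\le r\le n-1$, $$(n-1)\sum_{j=1}^r\lambda_{j+1}+r\lambda_1\le n\sum_{j=1}^r\mu_j\le(n-1)\sum_{j=1}^r\lambda_j+r\lambda_{r+1}.$$ *)

theory Defs
  imports Complex_Main "HOL-Computational_Algebra.Polynomial"
begin

end

theory Submission
  imports Defs
begin

text \<open>
  Counted with multiplicities, Rolle's theorem shows that on any interval the derivative of a
  polynomial loses at most one root. For real-rooted polynomials this pins down how many critical
  points lie above a generic point t, and comparing signs in q'(t)/q(t) = \<Sum>i. 1/(t - lam i)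
  then shows that the j-th largest critical point is monotone in the roots.

  For the upper bound raise lam (r+2), ..., lam n to lam (r+1): no critical point decreases, all
  new ones are at least lam (r+1), and they sum to (n-1)/n times the sum of the roots, which
  bounds their r largest. For the lower bound raise lam 2, ..., lam (r+1) to lam 1: then lam 1 is
  a critical point of multiplicity r, so the r largest new critical points equal lam 1, while the
  remaining ones dominate the old ones.
\<close>

definition poly_of_roots :: "(nat \<Rightarrow> 'a::comm_ring_1) \<Rightarrow> nat \<Rightarrow> 'a poly" where
  "poly_of_roots a m = (\<Prod>j=1..m. [:- a j, 1:])"

lemma poly_of_roots_Suc: "poly_of_roots a (Suc m) = poly_of_roots a m * [:- a (Suc m), 1:]"
  by (simp add: poly_of_roots_def)

lemma poly_poly_of_roots: "poly (poly_of_roots a m) t = (\<Prod>j=1..m. t - a j)"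
  by (simp add: poly_of_roots_def poly_prod)

lemma count_image_mset_mset_set:
  assumes "finite A"
  shows "count (image_mset a (mset_set A)) x = card {j\<in>A. a j = x}"
  using assms by (simp add: count_image_mset Int_commute[of _ A] vimage_def Collect_conj_eq)

lemma proots_poly_of_roots: "proots (poly_of_roots a m) = image_mset a (mset_set {1..m})"
  by (simp add: poly_of_roots_def proots_prod sum_unfold_sum_mset)

lemma degree_poly_of_roots [simp]: "degree (poly_of_roots (a :: nat \<Rightarrow> 'a::idom) m) = m"
  by (simp add: poly_of_roots_def degree_prod_sum_eq)

lemma lead_coeff_poly_of_roots [simp]: "coeff (poly_of_roots a m) m = (1 :: 'a::idom)"
  using lead_coeff_prod[of "\<lambda>j. [:- a j, 1:]" "{1..m}"]
  by (simp add: poly_of_roots_def degree_prod_sum_eq)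

lemma poly_of_roots_nonzero [simp]: "poly_of_roots a m \<noteq> (0 :: 'a::idom poly)"
  using lead_coeff_poly_of_roots[of a m] by (metis coeff_0 zero_neq_one)

lemma coeff_poly_of_roots_Suc:
  fixes a :: "nat \<Rightarrow> 'a::idom"
  shows "coeff (poly_of_roots a (Suc m)) m = - (\<Sum>j=1..Suc m. a j)"
proof (induction m)
  case 0
  then show ?case by (simp add: poly_of_roots_def)
next
  case (Suc m)
  have "poly_of_roots a (Suc (Suc m))
      = pCons 0 (poly_of_roots a (Suc m)) + smult (- a (Suc (Suc m))) (poly_of_roots a (Suc m))"
    by (simp add: poly_of_roots_Suc[of a "Suc m"] mult.commute)
  then show ?case using Suc by simp
qed

lemma lead_coeff_pderiv:
  fixes p :: "'a::{idom,semiring_char_0} poly"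
  shows "lead_coeff (pderiv p) = of_nat (degree p) * lead_coeff p"
proof (cases "degree p")
  case 0
  then show ?thesis by (simp add: pderiv_eq_0_iff)
next
  case (Suc m)
  then show ?thesis by (simp add: degree_pderiv coeff_pderiv)
qed

definition proots_count :: "'a::idom poly \<Rightarrow> 'a set \<Rightarrow> nat" where
  "proots_count p I = size {#x \<in># proots p. x \<in> I#}"

lemma proots_count_mono:
  assumes "I \<subseteq> J"
  shows "proots_count p I \<le> proots_count p J"
proof -
  have "{#x \<in># proots p. x \<in> I#} = {#x \<in># {#x \<in># proots p. x \<in> J#}. x \<in> I#}"
    using assms by (auto simp: filter_filter_mset intro: filter_mset_cong)
  then show ?thesis
    unfolding proots_count_def by (metis size_filter_mset_lesseq)
qed

lemma proots_count_Un:
  assumes "I \<inter> J = {}"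
  shows "proots_count p (I \<union> J) = proots_count p I + proots_count p J"
proof -
  have "{#x \<in># proots p. x \<in> I \<union> J#} = {#x \<in># proots p. x \<in> I#} + {#x \<in># proots p. x \<in> J#}"
    using assms by (intro multiset_eqI) auto
  then show ?thesis unfolding proots_count_def by simp
qed

lemma proots_count_Compl: "proots_count p I + proots_count p (- I) = size (proots p)"
  unfolding proots_count_def Compl_iff size_union[symmetric] multiset_partition[symmetric] ..

lemma proots_count_singleton: "p \<noteq> 0 \<Longrightarrow> proots_count p {x} = order x p"
  by (simp add: proots_count_def filter_eq_replicate_mset)

lemma proots_count_image_mset:
  assumes "proots p = image_mset a (mset_set A)" "finite A"
  shows "proots_count p I = card {j\<in>A. a j \<in> I}"
  using assms by (simp add: proots_count_def filter_mset_image_mset)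

lemma proots_count_poly_of_roots:
  "proots_count (poly_of_roots a m) I = card {i\<in>{1..m}. a i \<in> I}"
  by (simp add: proots_count_image_mset proots_poly_of_roots)

lemma proots_count_Compl_eq_0_iff: "proots_count p (- I) = 0 \<longleftrightarrow> set_mset (proots p) \<subseteq> I"
  by (auto simp: proots_count_def filter_mset_eq_mempty_iff)

lemma proots_count_roots_only:
  "proots_count p I = proots_count p {x\<in>I. poly p x = 0}"
proof (cases "p = 0")
  case False
  then show ?thesis
    unfolding proots_count_def by (intro arg_cong[where f = size] filter_mset_cong) auto
qed (simp add: proots_count_def)

lemma pderiv_nonzero_if_root:
  fixes p :: "'a::{idom,semiring_char_0} poly"
  assumes "p \<noteq> 0" "poly p x = 0"
  shows "pderiv p \<noteq> 0"
proof
  assume "pderiv p = 0"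
  then obtain c where "p = [:c:]" by (metis pderiv_eq_0_iff degree_eq_zeroE)
  then show False using assms by simp
qed

lemma proots_count_le_pderiv_hull:
  fixes p :: "real poly"
  assumes "p \<noteq> 0" and "finite A" "A \<noteq> {}" "\<And>x. x \<in> A \<Longrightarrow> poly p x = 0"
  shows "proots_count p A \<le> proots_count (pderiv p) {Min A..Max A} + 1"
  using assms(2-4)
proof (induction A rule: finite_linorder_max_induct)
  case (insert b A)
  have pb: "poly p b = 0" using insert.prems by simp
  have p': "pderiv p \<noteq> 0" using pderiv_nonzero_if_root[OF assms(1) pb] .
  have ob: "order b p = Suc (order b (pderiv p))" using order_pderiv[OF assms(1) pb] .
  have b_notin: "b \<notin> A" using insert.hyps(2) by blast
  show ?case
  proof (cases "A = {}")
    case True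
    then show ?thesis
      using ob by (simp add: proots_count_singleton[OF assms(1)] proots_count_singleton[OF p'])
  next
    case False
    define a where "a = Max A"
    have aA: "a \<in> A" and ab: "a < b" and Min_a: "Min A \<le> a"
      using False insert.hyps a_def by auto
    obtain c where ac: "a < c" and cb: "c < b" and pc: "poly (pderiv p) c = 0"
      using poly_MVT[OF ab, of p] pb insert.prems(2)[OF insertI2[OF aA]] by auto
    have oc: "order c (pderiv p) \<ge> 1"
      using pc p' order_root by (metis less_one not_le)
    have "proots_count p (insert b A) = order b p + proots_count p A"
      using proots_count_Un[of "{b}" A p] b_notin proots_count_singleton[OF assms(1)] by simp
    also have "\<dots> \<le> Suc (order b (pderiv p)) + proots_count (pderiv p) {Min A..a} + 1"
      using insert.IH False insert.prems ob a_def by simp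
    also have "\<dots> \<le> proots_count (pderiv p) ({Min A..a} \<union> {c} \<union> {b}) + 1"
      using oc ac cb ab proots_count_Un[of "{Min A..a} \<union> {c}" "{b}"]
        proots_count_Un[of "{Min A..a}" "{c}"]
      by (simp add: proots_count_singleton[OF p'] del: Un_insert_right)
    also have "\<dots> \<le> proots_count (pderiv p) {Min A..b} + 1"
      using ac cb Min_a by (intro add_right_mono proots_count_mono) auto
    moreover have "Min (insert b A) = Min A"
      using Min_insert[OF insert.hyps(1) False] Min_a ab by simp
    moreover have "Max (insert b A) = b"
      using Max_insert[OF insert.hyps(1) False] ab by (simp add: a_def)
    ultimately show ?thesis by simp
  qed
qed simp

theorem proots_count_le_pderiv:
  fixes p :: "real poly"
  assumes "p \<noteq> 0" "connected I"
  shows "proots_count p I \<le> proots_count (pderiv p) I + 1"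
proof -
  define A where "A = {x\<in>I. poly p x = 0}"
  have A: "finite A" "\<And>x. x \<in> A \<Longrightarrow> poly p x = 0"
    using poly_roots_finite[OF assms(1)] unfolding A_def by (auto intro: finite_subset)
  have "proots_count p I = proots_count p A"
    unfolding A_def by (rule proots_count_roots_only)
  moreover have "proots_count p A \<le> proots_count (pderiv p) I + 1"
  proof (cases "A = {}")
    case True
    then show ?thesis by (simp add: proots_count_def)
  next
    case False
    have "Min A \<in> I" "Max A \<in> I"
      using Min_in[OF A(1) False] Max_in[OF A(1) False] by (simp_all add: A_def)
    then have "{Min A..Max A} \<subseteq> I"
      by (rule connected_contains_Icc[OF assms(2)])
    then show ?thesis
      using proots_count_le_pderiv_hull[OF assms(1) A(1) False A(2)] proots_count_mono
      by (meson add_le_mono1 order_trans)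
  qed
  ultimately show ?thesis by simp
qed

text \<open>The zero polynomial counts as real-rooted.\<close>

definition real_rooted :: "real poly \<Rightarrow> bool" where
  "real_rooted p \<longleftrightarrow> size (proots p) = degree p"

lemma real_rooted_poly_of_roots: "real_rooted (poly_of_roots a m)"
  by (simp add: real_rooted_def proots_poly_of_roots)

lemma real_rooted_pderiv:
  assumes "real_rooted p"
  shows "real_rooted (pderiv p)"
proof (cases "degree p = 0")
  case True
  then have "pderiv p = 0" by (simp add: pderiv_eq_0_iff)
  then show ?thesis by (simp add: real_rooted_def)
next
  case False
  then have "p \<noteq> 0" by auto
  then have "size (proots p) \<le> size (proots (pderiv p)) + 1"
    using proots_count_le_pderiv[of p UNIV] by (simp add: proots_count_def)
  then show ?thesis
    using assms size_proots_le[of "pderiv p"] by (simp add: real_rooted_def degree_pderiv)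
qed

lemma real_rooted_decompose:
  "real_rooted p \<Longrightarrow> smult (lead_coeff p) (\<Prod>x\<in>#proots p. [:- x, 1:]) = p"
proof (induction p rule: poly_root_order_induct)
  case (no_roots p)
  moreover have "p \<noteq> 0" using no_roots.hyps by auto
  ultimately have "proots p = {#}"
    by (intro multiset_eqI) (simp add: order_0I)
  then have "degree p = 0" using no_roots.prems by (simp add: real_rooted_def)
  then obtain c where "p = [:c:]" by (rule degree_eq_zeroE)
  then show ?case using \<open>proots p = {#}\<close> by simp
next
  case (root p x n)
  have p: "p \<noteq> 0" using root.hyps(2) by auto
  have proots: "proots ([:- x, 1:] ^ n * p) = replicate_mset n x + proots p"
    using p by (simp add: proots_mult proots_power repeat_mset_replicate_mset)
  have "real_rooted p"
    using root.prems p by (simp add: real_rooted_def proots degree_mult_eq degree_power_eq)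
  have "smult (lead_coeff ([:- x, 1:] ^ n * p)) (\<Prod>y\<in>#proots ([:- x, 1:] ^ n * p). [:- y, 1:])
      = smult (lead_coeff p) ([:- x, 1:] ^ n * (\<Prod>y\<in>#proots p. [:- y, 1:]))"
    by (simp add: proots lead_coeff_mult lead_coeff_power)
  also have "\<dots> = [:- x, 1:] ^ n * p"
    using root.IH \<open>real_rooted p\<close> by (metis mult_smult_right)
  finally show ?case .
qed simp

lemma sgn_prod_mset_diff:
  fixes M :: "real multiset"
  assumes "t \<notin># M"
  shows "sgn (\<Prod>x\<in>#M. t - x) = (-1) ^ size {#x \<in># M. t < x#}"
  using assms
proof (induction M)
  case (add y M)
  then show ?case by (auto simp: sgn_mult)
qed simp

lemma sgn_poly_real_rooted:
  assumes "real_rooted p" "poly p t \<noteq> 0"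
  shows "sgn (poly p t) = sgn (lead_coeff p) * (-1) ^ proots_count p {t<..}"
proof -
  have "p \<noteq> 0" using assms(2) by auto
  then have "t \<notin># proots p" using assms(2) by simp
  moreover have "poly p t = lead_coeff p * (\<Prod>x\<in>#proots p. t - x)"
    by (subst real_rooted_decompose[OF assms(1), symmetric]) (simp add: poly_prod_mset)
  ultimately show ?thesis
    by (simp add: sgn_mult sgn_prod_mset_diff proots_count_def)
qed

lemma proots_count_pderiv_greaterThan:
  assumes "real_rooted p"
  shows "proots_count (pderiv p) {t<..} \<le> proots_count p {t<..}"
    and "proots_count p {t<..} \<le> proots_count (pderiv p) {t<..} + 1"
proof -
  have *: "proots_count q {t<..} + proots_count q {..t} = size (proots q)" for q :: "real poly"
    using proots_count_Compl[of q "{t<..}"] by (simp add: not_less atMost_def Compl_eq)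
  show "proots_count p {t<..} \<le> proots_count (pderiv p) {t<..} + 1"
    using proots_count_le_pderiv[of p "{t<..}"] by (cases "p = 0") (auto simp: proots_count_def)
  show "proots_count (pderiv p) {t<..} \<le> proots_count p {t<..}"
  proof (cases "degree p = 0")
    case True
    then have "pderiv p = 0" by (simp add: pderiv_eq_0_iff)
    then show ?thesis by (simp add: proots_count_def)
  next
    case False
    then have "proots_count p {..t} \<le> proots_count (pderiv p) {..t} + 1"
      by (intro proots_count_le_pderiv) auto
    then show ?thesis
      using *[of p] *[of "pderiv p"] assms real_rooted_pderiv[OF assms] False
      by (simp add: real_rooted_def degree_pderiv)
  qed
qed

lemma set_proots_pderiv_subset:
  assumes "real_rooted p" "connected I" "set_mset (proots p) \<subseteq> I"
  shows "set_mset (proots (pderiv p)) \<subseteq> I"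
proof (cases "degree p = 0")
  case True
  then have "pderiv p = 0" by (simp add: pderiv_eq_0_iff)
  then show ?thesis by simp
next
  case False
  then have "p \<noteq> 0" by auto
  have "proots_count p I = degree p"
    using proots_count_Compl[of p I] assms(1,3) proots_count_Compl_eq_0_iff[of p I]
    by (simp add: real_rooted_def)
  moreover have "proots_count p I \<le> proots_count (pderiv p) I + 1"
    using proots_count_le_pderiv[OF \<open>p \<noteq> 0\<close> assms(2)] .
  moreover have "proots_count (pderiv p) I + proots_count (pderiv p) (- I) = degree p - 1"
    using proots_count_Compl[of "pderiv p" I] real_rooted_pderiv[OF assms(1)]
    by (simp add: real_rooted_def degree_pderiv)
  ultimately have "proots_count (pderiv p) (- I) = 0"
    using False by linarith
  then show ?thesis by (simp add: proots_count_Compl_eq_0_iff)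
qed

lemma obtain_antimono_enumeration:
  fixes M :: "'a::linorder multiset"
  obtains a where "antimono_on {1..size M} a" "image_mset a (mset_set {1..size M}) = M"
proof
  define xs where "xs = sorted_list_of_multiset M"
  define m where "m = size M"
  have xs: "sorted xs" "mset xs = M" "length xs = m"
    unfolding xs_def m_def by (auto simp flip: size_mset)
  show "antimono_on {1..size M} (\<lambda>j. xs ! (m - j))"
    by (intro monotone_onI) (auto simp: m_def xs intro!: sorted_nth_mono)
  have "(\<lambda>j. m - j) ` {1..m} = {0..<m}"
  proof (intro equalityI subsetI)
    fix k assume "k \<in> {0..<m}"
    then show "k \<in> (\<lambda>j. m - j) ` {1..m}" by (intro image_eqI[of _ _ "m - k"]) auto
  qed auto
  moreover have "inj_on (\<lambda>j. m - j) {1..m}"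
    by (auto simp: inj_on_def)
  ultimately have reindex: "image_mset (\<lambda>j. m - j) (mset_set {1..m}) = mset_set {0..<m}"
    by (simp add: image_mset_mset_set)
  have "image_mset (\<lambda>j. xs ! (m - j)) (mset_set {1..m})
      = image_mset (nth xs) (image_mset (\<lambda>j. m - j) (mset_set {1..m}))"
    by (simp add: image_mset.compositionality comp_def)
  also have "\<dots> = image_mset (nth xs) (mset_set {0..<m})"
    by (simp only: reindex)
  also have "\<dots> = mset (map (nth xs) [0..<length xs])"
    using xs(3) by simp
  finally show "image_mset (\<lambda>j. xs ! (m - j)) (mset_set {1..size M}) = M"
    using xs(2) by (simp add: m_def map_nth)
qed

lemma obtain_critical_points:
  fixes a :: "nat \<Rightarrow> real"
  obtains mu where "antimono_on {1..n - 1} mu"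
    "proots (pderiv (poly_of_roots a n)) = image_mset mu (mset_set {1..n - 1})"
proof -
  have "size (proots (pderiv (poly_of_roots a n))) = n - 1"
    using real_rooted_pderiv[OF real_rooted_poly_of_roots[of a n]]
    by (simp add: real_rooted_def degree_pderiv)
  then show ?thesis
    using obtain_antimono_enumeration[of "proots (pderiv (poly_of_roots a n))"] that by metis
qed

lemma pderiv_poly_of_roots_eq:
  fixes a mu :: "nat \<Rightarrow> real"
  assumes "proots (pderiv (poly_of_roots a n)) = image_mset mu (mset_set {1..n - 1})"
  shows "pderiv (poly_of_roots a n) = smult (real n) (poly_of_roots mu (n - 1))"
proof -
  have "(\<Prod>x\<in>#proots (pderiv (poly_of_roots a n)). [:- x, 1:]) = poly_of_roots mu (n - 1)"
    unfolding assms
    by (simp add: poly_of_roots_def prod_unfold_prod_mset image_mset.compositionality comp_def)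
  moreover have "lead_coeff (pderiv (poly_of_roots a n)) = real n"
    by (simp add: lead_coeff_pderiv)
  ultimately show ?thesis
    using real_rooted_decompose[OF real_rooted_pderiv[OF real_rooted_poly_of_roots[of a n]]]
    by simp
qed

lemma sum_critical_points:
  fixes a mu :: "nat \<Rightarrow> real"
  assumes "proots (pderiv (poly_of_roots a n)) = image_mset mu (mset_set {1..n - 1})"
  shows "real n * (\<Sum>j=1..n - 1. mu j) = real (n - 1) * (\<Sum>i=1..n. a i)"
proof (cases "n < 2")
  case True
  then show ?thesis by (auto simp: less_2_cases_iff)
next
  case False
  then obtain k where n: "n = Suc (Suc k)" by (metis add_2_eq_Suc le_Suc_ex not_less)
  have "coeff (pderiv (poly_of_roots a n)) k = - (real (Suc k) * (\<Sum>i=1..n. a i))"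
    unfolding coeff_pderiv n coeff_poly_of_roots_Suc by (simp del: sum.cl_ivl_Suc)
  moreover have "coeff (pderiv (poly_of_roots a n)) k = real n * coeff (poly_of_roots mu (n - 1)) k"
    unfolding pderiv_poly_of_roots_eq[OF assms] by simp
  moreover have "coeff (poly_of_roots mu (n - 1)) k = - (\<Sum>j=1..n - 1. mu j)"
    using coeff_poly_of_roots_Suc[of mu k] by (simp add: n)
  ultimately have "real n * (\<Sum>j=1..n - 1. mu j) = real (Suc k) * (\<Sum>i=1..n. a i)"
    by (simp del: sum.cl_ivl_Suc)
  then show ?thesis by (simp add: n del: sum.cl_ivl_Suc)
qed

lemma poly_pderiv_poly_of_roots:
  fixes a :: "nat \<Rightarrow> 'a::field"
  assumes "\<And>i. i \<in> {1..m} \<Longrightarrow> a i \<noteq> t"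
  shows "poly (pderiv (poly_of_roots a m)) t
    = poly (poly_of_roots a m) t * (\<Sum>i=1..m. 1 / (t - a i))"
proof -
  have "poly (pderiv (poly_of_roots a m)) t = (\<Sum>i=1..m. \<Prod>k\<in>{1..m} - {i}. t - a k)"
    unfolding poly_of_roots_def pderiv_prod by (simp add: poly_sum poly_prod pderiv_pCons)
  also have "\<dots> = (\<Sum>i=1..m. (\<Prod>k=1..m. t - a k) * (1 / (t - a i)))"
  proof (rule sum.cong[OF refl])
    fix i assume i: "i \<in> {1..m}"
    then have "(\<Prod>k=1..m. t - a k) = (t - a i) * (\<Prod>k\<in>{1..m} - {i}. t - a k)"
      by (simp add: prod.remove)
    moreover have "t - a i \<noteq> 0" using assms[OF i] by simp
    ultimately show "(\<Prod>k\<in>{1..m} - {i}. t - a k) = (\<Prod>k=1..m. t - a k) * (1 / (t - a i))"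
      by simp
  qed
  finally show ?thesis by (simp add: poly_poly_of_roots sum_distrib_left)
qed

lemma sgn_sum_inverse_diff:
  fixes a :: "nat \<Rightarrow> real" and n :: nat
  defines "q \<equiv> poly_of_roots a n"
  assumes "poly q t \<noteq> 0" "poly (pderiv q) t \<noteq> 0"
  shows "sgn (\<Sum>i=1..n. 1 / (t - a i))
    = (-1) ^ (proots_count q {t<..} + proots_count (pderiv q) {t<..})"
proof -
  have "a i \<noteq> t" if "i \<in> {1..n}" for i
    using assms(2) that by (auto simp: q_def poly_poly_of_roots)
  then have "poly (pderiv q) t = poly q t * (\<Sum>i=1..n. 1 / (t - a i))"
    unfolding q_def by (rule poly_pderiv_poly_of_roots)
  then have "poly (pderiv q) t * poly q t = (\<Sum>i=1..n. 1 / (t - a i)) * (poly q t)\<^sup>2"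
    by (simp add: power2_eq_square)
  moreover have "(poly q t)\<^sup>2 > 0" using assms(2) by simp
  ultimately have "sgn (\<Sum>i=1..n. 1 / (t - a i)) = sgn (poly (pderiv q) t) * sgn (poly q t)"
    by (metis sgn_mult sgn_pos mult.right_neutral)
  moreover have "n > 0"
    using assms(3) by (cases n) (simp_all add: q_def poly_of_roots_def)
  ultimately show ?thesis
    using sgn_poly_real_rooted[OF _ assms(2)] sgn_poly_real_rooted[OF _ assms(3)]
    by (simp add: q_def real_rooted_poly_of_roots real_rooted_pderiv lead_coeff_pderiv power_add)
qed

lemma antimono_on_mem_iff_le_card:
  fixes a :: "nat \<Rightarrow> 'a::order"
  assumes "antimono_on {1..m} a" "\<And>x y. x \<in> U \<Longrightarrow> x \<le> y \<Longrightarrow> y \<in> U" "j \<in> {1..m}"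
  shows "a j \<in> U \<longleftrightarrow> j \<le> card {i\<in>{1..m}. a i \<in> U}"
proof
  assume "a j \<in> U"
  have "a j \<le> a i" if "i \<in> {1..j}" for i
    using monotone_onD[OF assms(1), of i j] that assms(3) by auto
  then have "{1..j} \<subseteq> {i\<in>{1..m}. a i \<in> U}"
    using assms(2,3) \<open>a j \<in> U\<close> by auto
  then show "j \<le> card {i\<in>{1..m}. a i \<in> U}"
    using card_mono[of "{i\<in>{1..m}. a i \<in> U}" "{1..j}"] by simp
next
  assume j: "j \<le> card {i\<in>{1..m}. a i \<in> U}"
  show "a j \<in> U"
  proof (rule ccontr)
    assume "a j \<notin> U"
    have "a i \<le> a j" if "i \<in> {j..m}" for i
      using monotone_onD[OF assms(1), of j i] that assms(3) by auto
    then have "{i\<in>{1..m}. a i \<in> U} \<subseteq> {1..<j}"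
      using assms(2) \<open>a j \<notin> U\<close> by (auto simp: not_less) (meson atLeastAtMost_iff not_le)
    then have "card {i\<in>{1..m}. a i \<in> U} \<le> j - 1"
      using card_mono[of "{1..<j}" "{i\<in>{1..m}. a i \<in> U}"] by simp
    then show False
      using j assms(3) by auto
  qed
qed

lemma sum_inverse_diff_mono:
  fixes a b :: "nat \<Rightarrow> real"
  assumes "\<And>i. i \<in> A \<Longrightarrow> a i \<le> b i" "\<And>i. i \<in> A \<Longrightarrow> t < a i \<longleftrightarrow> t < b i"
    and "\<And>i. i \<in> A \<Longrightarrow> a i \<noteq> t \<and> b i \<noteq> t"
  shows "(\<Sum>i\<in>A. 1 / (t - a i)) \<le> (\<Sum>i\<in>A. 1 / (t - b i))"
proof (rule sum_mono)
  fix i assume i: "i \<in> A"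
  show "1 / (t - a i) \<le> 1 / (t - b i)"
  proof (cases "t < a i")
    case True
    then have "t - b i \<le> t - a i" "t - a i < 0" using assms(1)[OF i] by auto
    then show ?thesis by (simp add: divide_le_eq_1_neg le_divide_eq)
  next
    case False
    then have "t - b i \<le> t - a i" "0 < t - b i" using assms[OF i] by auto
    then show ?thesis by (simp add: frac_le)
  qed
qed

text \<open>
  If p' had more roots above t than q', the interlacing counts would force a and b to have the
  same roots above t, with p' having one more root there than q'. Then
  \<Sum>i. 1/(t - a i) > 0 > \<Sum>i. 1/(t - b i), contradicting a \<le> b termwise.
\<close>

lemma proots_count_pderiv_greaterThan_mono:
  fixes a b :: "nat \<Rightarrow> real" and n :: nat
  defines "p \<equiv> poly_of_roots a n" and "q \<equiv> poly_of_roots b n"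
  assumes le: "\<And>i. i \<in> {1..n} \<Longrightarrow> a i \<le> b i"
    and nonzero: "poly p t \<noteq> 0" "poly (pderiv p) t \<noteq> 0" "poly q t \<noteq> 0" "poly (pderiv q) t \<noteq> 0"
  shows "proots_count (pderiv p) {t<..} \<le> proots_count (pderiv q) {t<..}"
proof (rule ccontr)
  assume "\<not> ?thesis"
  moreover have sub: "{i\<in>{1..n}. a i \<in> {t<..}} \<subseteq> {i\<in>{1..n}. b i \<in> {t<..}}"
    using le by fastforce
  then have "proots_count p {t<..} \<le> proots_count q {t<..}"
    unfolding p_def q_def proots_count_poly_of_roots by (intro card_mono) auto
  ultimately have counts: "proots_count (pderiv p) {t<..} = proots_count p {t<..}"
      "proots_count q {t<..} = proots_count (pderiv q) {t<..} + 1"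
      "proots_count p {t<..} = proots_count q {t<..}"
    using proots_count_pderiv_greaterThan[OF real_rooted_poly_of_roots, of a n t]
      proots_count_pderiv_greaterThan[OF real_rooted_poly_of_roots, of b n t]
    unfolding p_def q_def by linarith+
  have "{i\<in>{1..n}. a i \<in> {t<..}} = {i\<in>{1..n}. b i \<in> {t<..}}"
    using sub counts(3) unfolding p_def q_def proots_count_poly_of_roots
    by (intro card_subset_eq) auto
  moreover have "a i \<noteq> t \<and> b i \<noteq> t" if "i \<in> {1..n}" for i
    using nonzero(1,3) that by (auto simp: p_def q_def poly_poly_of_roots)
  ultimately have "(\<Sum>i=1..n. 1 / (t - a i)) \<le> (\<Sum>i=1..n. 1 / (t - b i))"
    using le by (intro sum_inverse_diff_mono) auto
  moreover have "sgn (\<Sum>i=1..n. 1 / (t - a i)) = 1"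
    using sgn_sum_inverse_diff[of a n t] nonzero(1,2) counts(1) by (simp add: p_def)
  moreover have "sgn (\<Sum>i=1..n. 1 / (t - b i)) = -1"
    using sgn_sum_inverse_diff[of b n t] nonzero(3,4) counts(2) by (simp add: q_def)
  ultimately show False by (simp add: sgn_1_pos sgn_1_neg)
qed

theorem critical_points_mono:
  fixes a b mu nu :: "nat \<Rightarrow> real" and n j :: nat
  defines "p \<equiv> poly_of_roots a n" and "q \<equiv> poly_of_roots b n"
  assumes le: "\<And>i. i \<in> {1..n} \<Longrightarrow> a i \<le> b i"
    and mu: "antimono_on {1..n - 1} mu" "proots (pderiv p) = image_mset mu (mset_set {1..n - 1})"
    and nu: "antimono_on {1..n - 1} nu" "proots (pderiv q) = image_mset nu (mset_set {1..n - 1})"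
    and j: "j \<in> {1..n - 1}"
  shows "mu j \<le> nu j"
proof (rule ccontr)
  assume "\<not> mu j \<le> nu j"
  define F where "F = set_mset (proots p + proots (pderiv p) + proots q + proots (pderiv q))"
  have "infinite ({nu j<..<mu j} - F)"
    using \<open>\<not> mu j \<le> nu j\<close> by (intro Diff_infinite_finite) (auto simp: F_def)
  then obtain t where "t \<in> {nu j<..<mu j} - F"
    by (metis finite.emptyI ex_in_conv)
  then have t: "nu j < t" "t < mu j" "t \<notin> F" by auto
  have "pderiv p \<noteq> 0" "pderiv q \<noteq> 0"
    using j by (auto simp: p_def q_def pderiv_eq_0_iff)
  then have "poly p t \<noteq> 0" "poly (pderiv p) t \<noteq> 0" "poly q t \<noteq> 0" "poly (pderiv q) t \<noteq> 0"
    using t(3) by (auto simp: F_def p_def q_def)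
  then have "proots_count (pderiv p) {t<..} \<le> proots_count (pderiv q) {t<..}"
    using proots_count_pderiv_greaterThan_mono[of n a b t] le unfolding p_def q_def by blast
  moreover have upward: "\<And>x y. x \<in> {t<..} \<Longrightarrow> x \<le> y \<Longrightarrow> y \<in> {t<..}" by auto
  have "mu j \<in> {t<..}" "nu j \<notin> {t<..}" using t by auto
  then have "j \<le> card {i\<in>{1..n - 1}. mu i \<in> {t<..}}" "\<not> j \<le> card {i\<in>{1..n - 1}. nu i \<in> {t<..}}"
    using antimono_on_mem_iff_le_card[OF mu(1) upward j]
      antimono_on_mem_iff_le_card[OF nu(1) upward j]
    by simp_all
  then have "proots_count (pderiv q) {t<..} < proots_count (pderiv p) {t<..}"
    using mu(2) nu(2) by (simp add: proots_count_image_mset del: greaterThan_iff)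
  ultimately show False by simp
qed

lemma sum_split_at:
  fixes f :: "nat \<Rightarrow> 'a::comm_monoid_add"
  assumes "r \<le> m"
  shows "(\<Sum>i=1..m. f i) = (\<Sum>i=1..r. f i) + (\<Sum>i=r+1..m. f i)"
  using sum.ub_add_nat[of 1 r f "m - r"] assms by simp

lemma sum_critical_points_upper:
  fixes lam mu :: "nat \<Rightarrow> real"
  assumes lam: "antimono_on {1..n} lam"
    and mu: "antimono_on {1..n - 1} mu"
      "proots (pderiv (poly_of_roots lam n)) = image_mset mu (mset_set {1..n - 1})"
    and r: "r < n"
  shows "real n * (\<Sum>j=1..r. mu j) \<le> real (n - 1) * (\<Sum>j=1..r. lam j) + real r * lam (r + 1)"
proof -
  define c where "c = lam (r + 1)"
  define b where "b i = (if i \<le> r then lam i else c)" for i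
  obtain nu where nu: "antimono_on {1..n - 1} nu"
    "proots (pderiv (poly_of_roots b n)) = image_mset nu (mset_set {1..n - 1})"
    using obtain_critical_points by blast
  have c_le_lam: "c \<le> lam i" if "i \<in> {1..r + 1}" for i
    using monotone_onD[OF lam, of i "r + 1"] that r by (auto simp: c_def)
  have "lam i \<le> b i" if "i \<in> {1..n}" for i
    using monotone_onD[OF lam, of "r + 1" i] that r by (auto simp: b_def c_def)
  then have mu_le_nu: "mu j \<le> nu j" if "j \<in> {1..n - 1}" for j
    using critical_points_mono[OF _ mu nu that] by blast
  have "set_mset (proots (poly_of_roots b n)) \<subseteq> {c..}"
    using c_le_lam by (auto simp: proots_poly_of_roots b_def)
  then have "set_mset (proots (pderiv (poly_of_roots b n))) \<subseteq> {c..}"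
    by (intro set_proots_pderiv_subset real_rooted_poly_of_roots) auto
  then have c_le_nu: "c \<le> nu j" if "j \<in> {1..n - 1}" for j
    using that by (simp add: nu(2) image_subset_iff)
  have casts: "real (n - r) = real n - real r" "real (n - 1) = real n - 1"
      "real (n - 1 - r) = real n - 1 - real r"
    using r by (simp_all add: of_nat_diff)
  have sum_b: "(\<Sum>i=1..n. b i) = (\<Sum>i=1..r. lam i) + real (n - r) * c"
    using sum_split_at[of r n b] r by (simp add: b_def)
  have tail_nu: "real (n - 1 - r) * c \<le> (\<Sum>j=r+1..n - 1. nu j)"
    using sum_mono[of "{r+1..n - 1}" "\<lambda>_. c" nu] c_le_nu by auto
  have "real n * (\<Sum>j=1..r. mu j) \<le> real n * (\<Sum>j=1..r. nu j)"
    using mu_le_nu r by (intro mult_left_mono sum_mono) auto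
  also have "\<dots> = real n * (\<Sum>j=1..n - 1. nu j) - real n * (\<Sum>j=r+1..n - 1. nu j)"
    using sum_split_at[of r "n - 1" nu] r by (simp add: algebra_simps)
  also have "\<dots> \<le> real (n - 1) * (\<Sum>i=1..n. b i) - real n * (real (n - 1 - r) * c)"
    using sum_critical_points[OF nu(2)] tail_nu by (simp add: mult_left_mono)
  also have "\<dots> = real (n - 1) * (\<Sum>j=1..r. lam j) + real r * c"
    unfolding sum_b casts by (simp add: algebra_simps)
  finally show ?thesis by (simp add: c_def)
qed

lemma critical_points_ge_multiple_root:
  fixes b nu :: "nat \<Rightarrow> real"
  assumes nu: "antimono_on {1..n - 1} nu"
      "proots (pderiv (poly_of_roots b n)) = image_mset nu (mset_set {1..n - 1})"
    and mult: "r + 1 \<le> card {i\<in>{1..n}. b i = L}" and j: "j \<in> {1..r}"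
  shows "L \<le> nu j"
proof -
  define q where "q = poly_of_roots b n"
  have "card {i\<in>{1..n}. b i = L} \<le> card {1..n}"
    by (intro card_mono) auto
  then have n: "r + 1 \<le> n" using mult by simp
  have "r + 1 \<le> order L q"
    using mult
    by (simp add: q_def proots_poly_of_roots count_image_mset_mset_set flip: count_proots)
  then have "r \<le> order L (pderiv q)"
    using order_pderiv[of q L] order_root[of q L] by (simp add: q_def)
  moreover have "pderiv q \<noteq> 0"
    using n by (simp add: q_def pderiv_eq_0_iff)
  ultimately have "r \<le> card {j\<in>{1..n - 1}. nu j = L}"
    by (simp add: nu(2)[folded q_def] count_image_mset_mset_set flip: count_proots)
  moreover have "card {j\<in>{1..n - 1}. nu j = L} \<le> card {j\<in>{1..n - 1}. nu j \<in> {L..}}"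
    by (intro card_mono) auto
  ultimately have "r \<le> card {j\<in>{1..n - 1}. nu j \<in> {L..}}" by linarith
  then show ?thesis
    using antimono_on_mem_iff_le_card[OF nu(1), of "{L..}" j] j n by auto
qed

lemma sum_critical_points_lower:
  fixes lam mu :: "nat \<Rightarrow> real"
  assumes lam: "antimono_on {1..n} lam"
    and mu: "antimono_on {1..n - 1} mu"
      "proots (pderiv (poly_of_roots lam n)) = image_mset mu (mset_set {1..n - 1})"
    and r: "r < n"
  shows "real (n - 1) * (\<Sum>j=1..r. lam (j + 1)) + real r * lam 1 \<le> real n * (\<Sum>j=1..r. mu j)"
proof -
  define L where "L = lam 1"
  define b where "b i = (if i \<le> r + 1 then L else lam i)" for i
  obtain nu where nu: "antimono_on {1..n - 1} nu"
    "proots (pderiv (poly_of_roots b n)) = image_mset nu (mset_set {1..n - 1})"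
    using obtain_critical_points by blast
  have "lam i \<le> b i" if "i \<in> {1..n}" for i
    using monotone_onD[OF lam, of 1 i] that r by (auto simp: b_def L_def)
  then have mu_le_nu: "mu j \<le> nu j" if "j \<in> {1..n - 1}" for j
    using critical_points_mono[OF _ mu nu that] by blast
  have "{1..r + 1} \<subseteq> {i\<in>{1..n}. b i = L}"
    using r by (auto simp: b_def)
  then have "r + 1 \<le> card {i\<in>{1..n}. b i = L}"
    using card_mono[of "{i\<in>{1..n}. b i = L}" "{1..r + 1}"] by simp
  then have L_le_nu: "L \<le> nu j" if "j \<in> {1..r}" for j
    using critical_points_ge_multiple_root[OF nu _ that] by blast
  have casts: "real (n - 1) = real n - 1" using r by (simp add: of_nat_diff)
  have "(\<Sum>i=1..n. lam i) - (\<Sum>i=1..n. b i) = (\<Sum>i=1..r+1. lam i) - (\<Sum>i=1..r+1. b i)"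
    using sum_split_at[of "r + 1" n lam] sum_split_at[of "r + 1" n b] r by (simp add: b_def)
  also have "\<dots> = (\<Sum>j=1..r. lam (j + 1)) - real r * L"
    by (simp add: b_def L_def sum.atLeast_Suc_atMost sum.shift_bounds_cl_Suc_ivl algebra_simps
        del: sum.cl_ivl_Suc)
  finally have diff: "(\<Sum>i=1..n. lam i) - (\<Sum>i=1..n. b i) = (\<Sum>j=1..r. lam (j + 1)) - real r * L" .
  have "(\<Sum>j=r+1..n - 1. mu j) \<le> (\<Sum>j=r+1..n - 1. nu j)"
    using mu_le_nu by (intro sum_mono) auto
  moreover have "real r * L \<le> (\<Sum>j=1..r. nu j)"
    using sum_mono[of "{1..r}" "\<lambda>_. L" nu] L_le_nu by simp
  ultimately have head_mu:
    "(\<Sum>j=1..n - 1. mu j) - (\<Sum>j=1..n - 1. nu j) + real r * L \<le> (\<Sum>j=1..r. mu j)"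
    using sum_split_at[of r "n - 1" mu] sum_split_at[of r "n - 1" nu] r by simp
  have "real (n - 1) * (\<Sum>j=1..r. lam (j + 1)) + real r * L
      = real (n - 1) * ((\<Sum>i=1..n. lam i) - (\<Sum>i=1..n. b i)) + real n * (real r * L)"
    unfolding diff casts by (simp add: algebra_simps)
  also have "\<dots> = real n * ((\<Sum>j=1..n - 1. mu j) - (\<Sum>j=1..n - 1. nu j) + real r * L)"
    using sum_critical_points[OF mu(2)] sum_critical_points[OF nu(2)]
    by (simp add: algebra_simps)
  also have "\<dots> \<le> real n * (\<Sum>j=1..r. mu j)"
    using head_mu by (rule mult_left_mono) simp
  finally show ?thesis by (simp add: L_def)
qed

theorem corollary2p5:
  fixes n :: nat and lam mu :: "nat \<Rightarrow> real" and r :: nat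
  assumes "n \<ge> 2"
    and "\<And>i j. 1 \<le> i \<Longrightarrow> i \<le> j \<Longrightarrow> j \<le> n \<Longrightarrow> lam j \<le> lam i"
    and "\<And>i j. 1 \<le> i \<Longrightarrow> i \<le> j \<Longrightarrow> j \<le> n - 1 \<Longrightarrow> mu j \<le> mu i"
    and "\<And>x. order x (pderiv (\<Prod>j=1..n. [:- lam j, 1:]))
                 = card {j \<in> {1..n - 1}. mu j = x}"
    and "1 \<le> r" and "r \<le> n - 1"
  shows "real (n - 1) * (\<Sum>j=1..r. lam (j + 1)) + real r * lam 1 \<le> real n * (\<Sum>j=1..r. mu j)
       \<and> real n * (\<Sum>j=1..r. mu j) \<le> real (n - 1) * (\<Sum>j=1..r. lam j) + real r * lam (r + 1)"
proof -
  have lam: "antimono_on {1..n} lam"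
    using assms(2) by (intro monotone_onI) auto
  have mu: "antimono_on {1..n - 1} mu"
    using assms(3) by (intro monotone_onI) auto
  have "pderiv (poly_of_roots lam n) \<noteq> 0"
    using assms(1) by (simp add: pderiv_eq_0_iff)
  then have crit: "proots (pderiv (poly_of_roots lam n)) = image_mset mu (mset_set {1..n - 1})"
    using assms(4) by (intro multiset_eqI) (simp add: poly_of_roots_def count_image_mset_mset_set)
  have "r < n"
    using assms(1,6) by simp
  then show ?thesis
    using sum_critical_points_lower[OF lam mu crit] sum_critical_points_upper[OF lam mu crit]
    by simp
qed

end
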